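(* Let $\psi$ be a non-negative locally finite Borel measure on $\mathbb R^d$. If every (open) half-space of $\mathbb R^d$ has infinite $\psi$-measure, then all Voronoi territories with respect to $\psi$ are bounded. In particular, if $\Psi$ is a stationary random measure on $\mathbb R^d$ which is almost surely non-zero, then almost surely all Voronoi territories with respect to $\Psi_\omega$ are bounded.
   Context: $\overline B(x,r)$ denotes the closed ball. Voronoi density with respect to $\psi$ (with $\psi(\mathbb R^d)\ge 1$): for $x\in\mathbb R^d$ let $s(x)=\sup\{s\in\mathbb R:\psi(\overline B(x,s))\le1\}$ and $v(x,\xi)=1$ if $|x-\xi|<s(x)$, $v(x,\xi)=c$ if $|x-\xi|=s(x)$, $v(x,\xi)=0$ if $|x-\xi|>s(x)$, where $c\in[0,1]$ is such that $\int v(x,\xi)\psi(d\xi)=1$, with $c=1$ if $s(x)=\infty$ or $\psi(\partial\overline B(x,s(x)))=0$. The Voronoi territory of $\xi$ with respect to $\psi$ is $\{x:v(x,\xi)>0\}$. Random setup: measurable space $(\Omega,\mathcal F)$ with a measurable flow $(\theta_s)_{s\in\mathbb R^d}$ and probability $\mathbb P$; a random measure is a measurable $\Psi:\Omega\to M$ (non-negative locally finite Borel measures), stationary if $\mathbb P$ is invariant under all $\theta_s$ and $\Psi(\theta_s\omega)(B)=\Psi(\omega)(B+s)$ for all $s,\omega,B$. *)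

theory Defs
  imports "HOL-Probability.Probability"
begin

definition locally_finite_borel :: "'a::euclidean_space measure \<Rightarrow> bool" where
  "locally_finite_borel \<psi> \<longleftrightarrow> sets \<psi> = sets borel \<and> (\<forall>K. compact K \<longrightarrow> emeasure \<psi> K < \<infinity>)"

definition voronoi_radius :: "'a::euclidean_space measure \<Rightarrow> 'a \<Rightarrow> ereal" where
  "voronoi_radius \<psi> x = Sup (ereal ` {s::real. emeasure \<psi> (cball x s) \<le> 1})"

definition voronoi_aux :: "'a::euclidean_space measure \<Rightarrow> 'a \<Rightarrow> real \<Rightarrow> 'a \<Rightarrow> real" where
  "voronoi_aux \<psi> x c \<xi> =
     (if ereal (dist x \<xi>) < voronoi_radius \<psi> x then 1
      else if ereal (dist x \<xi>) = voronoi_radius \<psi> x then c else 0)"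

definition voronoi_c :: "'a::euclidean_space measure \<Rightarrow> 'a \<Rightarrow> real" where
  "voronoi_c \<psi> x =
     (if voronoi_radius \<psi> x = \<infinity>
         \<or> emeasure \<psi> (sphere x (real_of_ereal (voronoi_radius \<psi> x))) = 0 then 1
      else (THE c. c \<in> {0..1} \<and> (\<integral>\<^sup>+ \<xi>. ennreal (voronoi_aux \<psi> x c \<xi>) \<partial>\<psi>) = 1))"

definition voronoi_density :: "'a::euclidean_space measure \<Rightarrow> 'a \<Rightarrow> 'a \<Rightarrow> real" where
  "voronoi_density \<psi> x \<xi> = voronoi_aux \<psi> x (voronoi_c \<psi> x) \<xi>"

definition voronoi_territory :: "'a::euclidean_space measure \<Rightarrow> 'a \<Rightarrow> 'a set" where
  "voronoi_territory \<psi> \<xi> = {x. voronoi_density \<psi> x \<xi> > 0}"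

definition measurable_flow :: "'w measure \<Rightarrow> ('a::euclidean_space \<Rightarrow> 'w \<Rightarrow> 'w) \<Rightarrow> bool" where
  "measurable_flow M \<theta> \<longleftrightarrow>
     (\<lambda>(s, \<omega>). \<theta> s \<omega>) \<in> measurable (borel \<Otimes>\<^sub>M M) M
     \<and> (\<forall>\<omega>\<in>space M. \<theta> 0 \<omega> = \<omega>)
     \<and> (\<forall>s t. \<forall>\<omega>\<in>space M. \<theta> (s + t) \<omega> = \<theta> s (\<theta> t \<omega>))"

definition random_measure :: "'w measure \<Rightarrow> ('w \<Rightarrow> 'a::euclidean_space measure) \<Rightarrow> bool" where
  "random_measure M \<Psi> \<longleftrightarrow>
     (\<forall>\<omega>\<in>space M. locally_finite_borel (\<Psi> \<omega>))
     \<and> (\<forall>B\<in>sets borel. (\<lambda>\<omega>. emeasure (\<Psi> \<omega>) B) \<in> borel_measurable M)"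

definition stationary_random_measure ::
  "'w measure \<Rightarrow> ('a::euclidean_space \<Rightarrow> 'w \<Rightarrow> 'w) \<Rightarrow> ('w \<Rightarrow> 'a measure) \<Rightarrow> bool" where
  "stationary_random_measure M \<theta> \<Psi> \<longleftrightarrow>
     prob_space M \<and> measurable_flow M \<theta> \<and> random_measure M \<Psi>
     \<and> (\<forall>s. distr M M (\<theta> s) = M)
     \<and> (\<forall>s. \<forall>\<omega>\<in>space M. \<forall>B\<in>sets borel.
           emeasure (\<Psi> (\<theta> s \<omega>)) B = emeasure (\<Psi> \<omega>) ((\<lambda>x. x + s) ` B))"

end

theory Submission
  imports Defs
begin

text \<open>A point \<open>x\<close> of the territory of \<open>\<xi>\<close> sees mass at most \<open>1\<close> in every ball around \<open>x\<close>
  of radius less than \<open>|x - \<xi>|\<close>. If \<open>x\<close> is far from \<open>\<xi>\<close> in a direction close to a unit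
  vector \<open>u\<close>, such a ball swallows an arbitrarily large bounded piece of the half-space
  \<open>{y. u \<bullet> (y - \<xi>) > 1}\<close>, which has mass exceeding \<open>1\<close> when that half-space has infinite
  mass; compactness of the unit sphere makes the territory bounded.

  For a stationary random measure \<open>\<Psi>\<close>, take an open cone \<open>C\<close> with axis \<open>v\<close>: the masses
  \<open>\<Psi>(C + n v)\<close> decrease in \<open>n\<close> but all have the same law, so they are almost surely
  constant, and continuity from above forces a finite value to be \<open>0\<close>; the same argument for
  \<open>C - n v\<close>, which exhaust the space, shows that \<open>\<Psi>(C) = \<Psi>(\<real>\<^sup>d) \<noteq> 0\<close>. Hence \<open>\<Psi>(C) = \<infinity>\<close>
  almost surely, simultaneously for the countably many cones with apex and axis in a dense
  countable set, and every half-space contains one of them.\<close>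

lemma dist_le_voronoi_radius:
  assumes "x \<in> voronoi_territory \<psi> \<xi>"
  shows "ereal (dist x \<xi>) \<le> voronoi_radius \<psi> x"
  using assms unfolding voronoi_territory_def voronoi_density_def voronoi_aux_def
  by (auto split: if_splits)

lemma emeasure_cball_le_1_below_voronoi_radius:
  assumes "sets \<psi> = sets borel" "ereal R \<le> voronoi_radius \<psi> x" "r < R"
  shows "emeasure \<psi> (cball x r) \<le> 1"
proof -
  have "ereal r < Sup (ereal ` {s. emeasure \<psi> (cball x s) \<le> 1})"
    using assms(2,3) unfolding voronoi_radius_def by (meson less_ereal.simps(1) less_le_trans)
  then obtain s where s: "emeasure \<psi> (cball x s) \<le> 1" "r < s"
    by (auto simp: less_Sup_iff)
  have "emeasure \<psi> (cball x r) \<le> emeasure \<psi> (cball x s)"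
    using s(2) assms(1) by (intro emeasure_mono) (auto simp: sets_eq_imp_space_eq)
  with s show ?thesis by simp
qed

lemma emeasure_inter_cball_exceeds:
  assumes "sets \<psi> = sets borel" "S \<in> sets borel" "c < emeasure \<psi> S"
  obtains k :: nat where "c < emeasure \<psi> (S \<inter> cball x (real k))"
proof -
  have "(SUP k. emeasure \<psi> (S \<inter> cball x (real k))) = emeasure \<psi> (\<Union>k. S \<inter> cball x (real k))"
  proof (rule SUP_emeasure_incseq)
    show "range (\<lambda>k. S \<inter> cball x (real k)) \<subseteq> sets \<psi>"
      unfolding assms(1) by (intro image_subsetI sets.Int[OF assms(2)] borel_closed closed_cball)
    show "incseq (\<lambda>k. S \<inter> cball x (real k))"
      by (rule monoI) (use subset_cball in auto)
  qed
  also have "(\<Union>k. S \<inter> cball x (real k)) = S"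
  proof
    show "S \<subseteq> (\<Union>k. S \<inter> cball x (real k))"
    proof
      fix y assume "y \<in> S"
      moreover obtain k :: nat where "dist x y \<le> real k" using real_arch_simple by blast
      ultimately show "y \<in> (\<Union>k. S \<inter> cball x (real k))" by auto
    qed
  qed auto
  finally have "c < (SUP k. emeasure \<psi> (S \<inter> cball x (real k)))" using assms(3) by simp
  then show ?thesis using that by (auto simp: less_SUP_iff)
qed

lemma halfspace_cball_subset_far_cball:
  fixes u w \<xi> :: "'a::real_inner"
  assumes "norm w = 1" "norm (w - u) * k \<le> 1/2" "R \<ge> 2 * k^2 + 1"
  shows "{y. u \<bullet> (y - \<xi>) > 1} \<inter> cball \<xi> k \<subseteq> cball (\<xi> + R *\<^sub>R w) (R - 1/4)"
proof
  fix y assume "y \<in> {y. u \<bullet> (y - \<xi>) > 1} \<inter> cball \<xi> k"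
  hence uy: "u \<bullet> (y - \<xi>) > 1" and yk: "norm (y - \<xi>) \<le> k"
    by (auto simp: dist_norm norm_minus_commute)
  have "\<bar>(w - u) \<bullet> (y - \<xi>)\<bar> \<le> norm (w - u) * norm (y - \<xi>)" by (rule Cauchy_Schwarz_ineq2)
  also have "\<dots> \<le> norm (w - u) * k" using yk by (simp add: mult_left_mono)
  finally have "w \<bullet> (y - \<xi>) \<ge> 1/2"
    using uy assms(2) by (simp add: inner_diff_left abs_le_iff)
  moreover have "0 < R" using assms(3) zero_le_power2[of k] by linarith
  ultimately have "2 * R * (w \<bullet> (y - \<xi>)) \<ge> 2 * R * (1/2)"
    by (intro mult_left_mono) auto
  moreover have "(norm (y - \<xi>))^2 \<le> k^2"
    using yk by (simp add: power_mono)
  moreover have "(norm (y - (\<xi> + R *\<^sub>R w)))^2 = (norm (y - \<xi>))^2 - 2 * R * (w \<bullet> (y - \<xi>)) + R^2"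
  proof -
    have "y - (\<xi> + R *\<^sub>R w) = (y - \<xi>) - R *\<^sub>R w" by (simp add: algebra_simps)
    hence "(norm (y - (\<xi> + R *\<^sub>R w)))^2
        = (norm (y - \<xi>))^2 - 2 * ((y - \<xi>) \<bullet> (R *\<^sub>R w)) + (norm (R *\<^sub>R w))^2"
      by (simp add: dot_norm_neg field_simps)
    thus ?thesis using assms(1) by (simp add: inner_commute power_mult_distrib)
  qed
  ultimately have "(norm (y - (\<xi> + R *\<^sub>R w)))^2 \<le> k^2 - R + R^2" by linarith
  also have "\<dots> \<le> (R - 1/4)^2" using assms(3) by (simp add: power2_eq_square algebra_simps)
  finally have "(norm (y - (\<xi> + R *\<^sub>R w)))^2 \<le> (R - 1/4)^2" .
  hence "norm (y - (\<xi> + R *\<^sub>R w)) \<le> R - 1/4"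
    by (rule power2_le_imp_le) (use assms(3) zero_le_power2[of k] in linarith)
  thus "y \<in> cball (\<xi> + R *\<^sub>R w) (R - 1/4)" by (simp add: dist_norm norm_minus_commute)
qed

lemma voronoi_territory_avoids_direction:
  fixes \<psi> :: "'a::euclidean_space measure"
  assumes sets: "sets \<psi> = sets borel" and inf: "emeasure \<psi> {y. u \<bullet> y > u \<bullet> \<xi> + 1} = \<infinity>"
  obtains \<epsilon> R0 where "\<epsilon> > 0"
    "\<And>x. x \<in> voronoi_territory \<psi> \<xi> \<Longrightarrow> dist x \<xi> \<ge> R0 \<Longrightarrow> norm (sgn (x - \<xi>) - u) \<ge> \<epsilon>"
proof -
  define H where "H = {y. u \<bullet> (y - \<xi>) > 1}"
  have "H = {y. u \<bullet> y > u \<bullet> \<xi> + 1}" by (auto simp: H_def inner_diff_right)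
  hence "H \<in> sets borel" "emeasure \<psi> H = \<infinity>"
    using inf by (auto intro!: borel_open open_Collect_less continuous_intros)
  then obtain k :: nat where k: "1 < emeasure \<psi> (H \<inter> cball \<xi> (real k))"
    using emeasure_inter_cball_exceeds[OF sets, of H 1] by auto
  show ?thesis
  proof
    show "1 / (2 * real k + 2) > 0" by (simp add: add_pos_nonneg)
  next
    fix x assume x: "x \<in> voronoi_territory \<psi> \<xi>" and far: "dist x \<xi> \<ge> 2 * (real k)^2 + 1"
    show "norm (sgn (x - \<xi>) - u) \<ge> 1 / (2 * real k + 2)"
    proof (rule ccontr)
      assume "\<not> ?thesis"
      hence "norm (sgn (x - \<xi>) - u) * real k \<le> 1 / (2 * real k + 2) * real k"
        by (intro mult_right_mono) auto
      also have "\<dots> \<le> 1/2" by (simp add: field_simps)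
      finally have close: "norm (sgn (x - \<xi>) - u) * real k \<le> 1/2" .
      define R where "R = dist x \<xi>"
      have "0 < 2 * (real k)^2 + 1" by (intro add_nonneg_pos) auto
      hence "x \<noteq> \<xi>" using far by auto
      hence x_eq: "x = \<xi> + R *\<^sub>R sgn (x - \<xi>)" and "norm (sgn (x - \<xi>)) = 1"
        by (simp_all add: R_def sgn_div_norm dist_norm norm_sgn)
      hence "H \<inter> cball \<xi> (real k) \<subseteq> cball (\<xi> + R *\<^sub>R sgn (x - \<xi>)) (R - 1/4)"
        unfolding H_def using close far by (intro halfspace_cball_subset_far_cball) (auto simp: R_def)
      hence "H \<inter> cball \<xi> (real k) \<subseteq> cball x (R - 1/4)"
        by (simp only: x_eq[symmetric])
      hence "emeasure \<psi> (H \<inter> cball \<xi> (real k)) \<le> emeasure \<psi> (cball x (R - 1/4))"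
        using sets by (intro emeasure_mono) auto
      also have "\<dots> \<le> 1"
        using emeasure_cball_le_1_below_voronoi_radius[OF sets dist_le_voronoi_radius[OF x]]
        by (simp add: R_def)
      finally show False using k by simp
    qed
  qed
qed

lemma bounded_voronoi_territory:
  fixes \<psi> :: "'a::euclidean_space measure"
  assumes sets: "sets \<psi> = sets borel"
    and halfspaces: "\<And>a b. a \<noteq> 0 \<Longrightarrow> emeasure \<psi> {x. a \<bullet> x > b} = \<infinity>"
  shows "bounded (voronoi_territory \<psi> \<xi>)"
proof (rule ccontr)
  assume "\<not> bounded (voronoi_territory \<psi> \<xi>)"
  hence "\<not> (\<forall>x\<in>voronoi_territory \<psi> \<xi>. dist \<xi> x \<le> real n)" for n :: nat
    unfolding bounded_any_center[of _ \<xi>] by blast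
  hence "\<forall>n::nat. \<exists>x\<in>voronoi_territory \<psi> \<xi>. dist x \<xi> > real n"
    by (auto simp: not_le dist_commute)
  then obtain f where f: "\<And>n. f n \<in> voronoi_territory \<psi> \<xi>" "\<And>n. dist (f n) \<xi> > real n"
    by metis
  have "f n \<noteq> \<xi>" for n using f(2)[of n] by auto
  hence "\<forall>n. sgn (f n - \<xi>) \<in> sphere 0 1" by (simp add: norm_sgn)
  then obtain u r where u: "u \<in> sphere 0 1" "strict_mono r" "(\<lambda>n. sgn (f (r n) - \<xi>)) \<longlonglongrightarrow> u"
    by (rule seq_compactE[OF compact_imp_seq_compact[OF compact_sphere]]) (simp add: o_def)
  hence "u \<noteq> 0" by auto
  hence "emeasure \<psi> {y. u \<bullet> y > u \<bullet> \<xi> + 1} = \<infinity>" by (rule halfspaces)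
  then obtain \<epsilon> R0 where "\<epsilon> > 0" and avoid:
    "\<And>x. x \<in> voronoi_territory \<psi> \<xi> \<Longrightarrow> dist x \<xi> \<ge> R0 \<Longrightarrow> norm (sgn (x - \<xi>) - u) \<ge> \<epsilon>"
    using voronoi_territory_avoids_direction[OF sets] by blast
  with u(3) obtain N where N: "\<And>n. n \<ge> N \<Longrightarrow> dist (sgn (f (r n) - \<xi>)) u < \<epsilon>"
    unfolding lim_sequentially by blast
  obtain m :: nat where "R0 \<le> real m" using real_arch_simple by blast
  define n where "n = max N m"
  have "real m \<le> real (r n)" using seq_suble[OF u(2), of n] by (simp add: n_def)
  hence "norm (sgn (f (r n) - \<xi>) - u) \<ge> \<epsilon>"
    using avoid[OF f(1)] f(2)[of "r n"] \<open>R0 \<le> real m\<close> by simp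
  with N[of n] show False by (simp add: n_def dist_norm)
qed

lemma mem_translation_iff:
  fixes y :: "'a::ab_group_add"
  shows "y \<in> (\<lambda>x. x + s) ` B \<longleftrightarrow> y - s \<in> B"
  by (auto intro: image_eqI[where x = "y - s"])

lemma translation_image_image:
  fixes C :: "'a::ab_group_add set"
  shows "(\<lambda>x. x + a) ` (\<lambda>x. x + b) ` C = (\<lambda>x. x + (a + b)) ` C"
  by (auto simp: image_image add.assoc add.commute)

lemma sets_borel_translation:
  fixes B :: "'a::euclidean_space set"
  assumes "B \<in> sets borel"
  shows "(\<lambda>x. x + s) ` B \<in> sets borel"
proof -
  have "(\<lambda>x. x + s) ` B = (\<lambda>x. x - s) -` B \<inter> space borel"
    by (auto simp: mem_translation_iff)
  moreover have "(\<lambda>x::'a. x - s) \<in> borel_measurable borel" by measurable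
  ultimately show ?thesis using measurable_sets[OF _ assms] by metis
qed

text \<open>The open cone with apex \<open>p\<close>, axis \<open>v\<close> and half-opening angle \<open>\<pi>/3\<close>.\<close>
definition axial_cone :: "'a::real_inner \<Rightarrow> 'a \<Rightarrow> 'a set" where
  "axial_cone p v = {y. norm v / 2 * norm (y - p) < v \<bullet> (y - p)}"

lemma open_axial_cone: "open (axial_cone p v)"
  unfolding axial_cone_def by (intro open_Collect_less continuous_intros)

lemma axial_cone_translation_subset: "(\<lambda>x. x + v) ` axial_cone p v \<subseteq> axial_cone p v"
proof
  fix y assume "y \<in> (\<lambda>x. x + v) ` axial_cone p v"
  then obtain z where z: "z \<in> axial_cone p v" "y = z + v" by auto
  let ?w = "z - p"
  have "norm v / 2 * norm (?w + v) \<le> norm v / 2 * (norm ?w + norm v)"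
    by (simp add: mult_left_mono norm_triangle_ineq)
  also have "\<dots> = norm v / 2 * norm ?w + norm v / 2 * norm v" by (simp add: algebra_simps)
  also have "\<dots> < v \<bullet> ?w + v \<bullet> v"
  proof -
    have "norm v / 2 * norm v \<le> v \<bullet> v"
      by (simp add: power2_norm_eq_inner[symmetric] power2_eq_square)
    thus ?thesis using z(1) by (simp add: axial_cone_def)
  qed
  also have "\<dots> = v \<bullet> (?w + v)" by (simp add: inner_add_right)
  finally show "y \<in> axial_cone p v"
    using z(2) by (simp add: axial_cone_def algebra_simps)
qed

lemma INT_translations_axial_cone:
  assumes "v \<noteq> 0"
  shows "(\<Inter>n. (\<lambda>x. x + real n *\<^sub>R v) ` axial_cone p v) = {}"
proof (rule ccontr)
  assume "(\<Inter>n. (\<lambda>x. x + real n *\<^sub>R v) ` axial_cone p v) \<noteq> {}"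
  then obtain y where y: "\<And>n. y - real n *\<^sub>R v \<in> axial_cone p v"
    by (auto simp: mem_translation_iff) blast
  let ?w = "y - p"
  have nv: "norm v > 0" using assms by simp
  obtain n :: nat where "norm ?w / norm v < real n" using reals_Archimedean2 by blast
  hence n: "norm ?w < real n * norm v" using nv by (simp add: field_simps)
  have "y - real n *\<^sub>R v - p = ?w - real n *\<^sub>R v" by (simp add: algebra_simps)
  hence cone: "norm v / 2 * norm (?w - real n *\<^sub>R v) < v \<bullet> (?w - real n *\<^sub>R v)"
    using y[of n] unfolding axial_cone_def mem_Collect_eq by metis
  have "norm (real n *\<^sub>R v) \<le> norm (?w - real n *\<^sub>R v) + norm ?w"
    by (metis norm_minus_commute norm_triangle_sub add.commute)
  hence "norm v / 2 * (real n * norm v - norm ?w) \<le> norm v / 2 * norm (?w - real n *\<^sub>R v)"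
    using nv by (intro mult_left_mono) auto
  moreover have "v \<bullet> (?w - real n *\<^sub>R v) \<le> norm v * norm ?w - real n * (norm v)^2"
    using Cauchy_Schwarz_ineq2[of v ?w] by (simp add: inner_diff_right power2_norm_eq_inner)
  ultimately have "norm v * (real n * norm v) < norm v * norm ?w"
    using cone by (simp add: algebra_simps power2_eq_square)
  hence "real n * norm v < norm ?w" using nv by simp
  with n show False by simp
qed

lemma UN_translations_axial_cone:
  assumes "v \<noteq> 0"
  shows "(\<Union>n. (\<lambda>x. x + real n *\<^sub>R (- v)) ` axial_cone p v) = UNIV"
proof (intro set_eqI iffI)
  fix y :: 'a
  let ?w = "y - p"
  have nv: "norm v > 0" using assms by simp
  obtain n :: nat where "3 * norm ?w / norm v < real n" using reals_Archimedean2 by blast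
  hence "3 * norm ?w < real n * norm v" using nv by (simp add: field_simps)
  hence "norm v * (3 * norm ?w) < norm v * (real n * norm v)" using nv by (rule mult_strict_left_mono)
  hence "norm v / 2 * (norm ?w + real n * norm v) < - (norm v * norm ?w) + real n * (norm v)^2"
    by (simp add: algebra_simps power2_eq_square)
  moreover have "norm v / 2 * norm (?w + real n *\<^sub>R v) \<le> norm v / 2 * (norm ?w + real n * norm v)"
    using norm_triangle_ineq[of ?w "real n *\<^sub>R v"] nv by (intro mult_left_mono) auto
  moreover have "v \<bullet> (?w + real n *\<^sub>R v) \<ge> - (norm v * norm ?w) + real n * (norm v)^2"
    using Cauchy_Schwarz_ineq2[of v ?w] by (simp add: inner_add_right power2_norm_eq_inner)
  ultimately have "norm v / 2 * norm (?w + real n *\<^sub>R v) < v \<bullet> (?w + real n *\<^sub>R v)" by linarith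
  moreover have "y - real n *\<^sub>R (- v) - p = ?w + real n *\<^sub>R v" by (simp add: algebra_simps)
  ultimately have "y - real n *\<^sub>R (- v) \<in> axial_cone p v"
    unfolding axial_cone_def mem_Collect_eq by metis
  thus "y \<in> (\<Union>n. (\<lambda>x. x + real n *\<^sub>R (- v)) ` axial_cone p v)"
    by (auto simp only: mem_translation_iff UN_iff)
qed simp

lemma axial_cone_subset_halfspace:
  assumes "norm (a - v) \<le> norm v / 2" "a \<bullet> p > b"
  shows "axial_cone p v \<subseteq> {x. a \<bullet> x > b}"
proof
  fix y assume "y \<in> axial_cone p v"
  hence cone: "norm v / 2 * norm (y - p) < v \<bullet> (y - p)" by (simp add: axial_cone_def)
  have "\<bar>(a - v) \<bullet> (y - p)\<bar> \<le> norm (a - v) * norm (y - p)" by (rule Cauchy_Schwarz_ineq2)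
  also have "\<dots> \<le> norm v / 2 * norm (y - p)" using assms(1) by (intro mult_right_mono) auto
  finally have "(a - v) \<bullet> (y - p) \<ge> - (norm v / 2 * norm (y - p))" by linarith
  hence "a \<bullet> (y - p) > 0" using cone by (simp add: inner_diff_left)
  thus "y \<in> {x. a \<bullet> x > b}" using assms(2) by (simp add: inner_diff_right)
qed

lemma emeasure_halfspace_infinite_if_dense_cones:
  fixes \<psi> :: "'a::euclidean_space measure"
  assumes sets: "sets \<psi> = sets borel"
    and dense: "\<And>X. open X \<Longrightarrow> X \<noteq> {} \<Longrightarrow> \<exists>d\<in>D. d \<in> X"
    and cones: "\<And>p v. p \<in> D \<Longrightarrow> v \<in> D \<Longrightarrow> v \<noteq> 0 \<Longrightarrow> emeasure \<psi> (axial_cone p v) = \<infinity>"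
    and "a \<noteq> 0"
  shows "emeasure \<psi> {x. a \<bullet> x > b} = \<infinity>"
proof -
  obtain v where v: "v \<in> D" "v \<in> ball a (norm a / 3)" using dense[of "ball a (norm a / 3)"] \<open>a \<noteq> 0\<close> by auto
  hence "norm (a - v) < norm a / 3" by (simp add: dist_norm)
  moreover have "norm a \<le> norm v + norm (a - v)" using norm_triangle_ineq[of v "a - v"] by simp
  ultimately have "norm (a - v) \<le> norm v / 2" "v \<noteq> 0" by auto
  have "a \<bullet> (((b + 1) / (a \<bullet> a)) *\<^sub>R a) > b" using \<open>a \<noteq> 0\<close> by simp
  moreover have "open {x. a \<bullet> x > b}" by (intro open_Collect_less continuous_intros)
  ultimately obtain p where "p \<in> D" "a \<bullet> p > b" using dense[of "{x. a \<bullet> x > b}"] by blast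
  have "emeasure \<psi> (axial_cone p v) \<le> emeasure \<psi> {x. a \<bullet> x > b}"
    using axial_cone_subset_halfspace[OF \<open>norm (a - v) \<le> norm v / 2\<close> \<open>a \<bullet> p > b\<close>] sets
    by (intro emeasure_mono) (auto intro!: borel_open open_Collect_less continuous_intros)
  thus ?thesis using cones[OF \<open>p \<in> D\<close> v(1) \<open>v \<noteq> 0\<close>] by (simp add: top_unique)
qed

lemma stationary_random_measureD:
  assumes "stationary_random_measure M \<theta> \<Psi>"
  shows "prob_space M" "\<theta> s \<in> M \<rightarrow>\<^sub>M M"
    "\<And>\<omega>. \<omega> \<in> space M \<Longrightarrow> sets (\<Psi> \<omega>) = sets borel"
    "\<And>B. B \<in> sets borel \<Longrightarrow> (\<lambda>\<omega>. emeasure (\<Psi> \<omega>) B) \<in> borel_measurable M"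
    "distr M M (\<theta> s) = M"
    "\<And>\<omega> B. \<omega> \<in> space M \<Longrightarrow> B \<in> sets borel \<Longrightarrow>
       emeasure (\<Psi> (\<theta> s \<omega>)) B = emeasure (\<Psi> \<omega>) ((\<lambda>x. x + s) ` B)"
proof -
  note A = assms[unfolded stationary_random_measure_def measurable_flow_def random_measure_def
      locally_finite_borel_def]
  show "prob_space M" using A by blast
  have j: "(\<lambda>(s, \<omega>). \<theta> s \<omega>) \<in> borel \<Otimes>\<^sub>M M \<rightarrow>\<^sub>M M" using A by blast
  have "(\<lambda>\<omega>. (\<lambda>(s, \<omega>). \<theta> s \<omega>) (Pair s \<omega>)) \<in> M \<rightarrow>\<^sub>M M"
    by (rule measurable_compose[OF measurable_Pair1' j]) simp
  thus "\<theta> s \<in> M \<rightarrow>\<^sub>M M" by simp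
  show "\<And>\<omega>. \<omega> \<in> space M \<Longrightarrow> sets (\<Psi> \<omega>) = sets borel" using A by blast
  show "\<And>B. B \<in> sets borel \<Longrightarrow> (\<lambda>\<omega>. emeasure (\<Psi> \<omega>) B) \<in> borel_measurable M" using A by blast
  show "distr M M (\<theta> s) = M" using A by blast
  show "\<And>\<omega> B. \<omega> \<in> space M \<Longrightarrow> B \<in> sets borel \<Longrightarrow>
       emeasure (\<Psi> (\<theta> s \<omega>)) B = emeasure (\<Psi> \<omega>) ((\<lambda>x. x + s) ` B)" using A by blast
qed

lemma AE_gt_imp_gt_if_ge_and_same_distr:
  fixes X Y :: "'w \<Rightarrow> ennreal"
  assumes P: "prob_space M" and X: "X \<in> borel_measurable M" and Y: "Y \<in> borel_measurable M"
    and le: "\<And>\<omega>. \<omega> \<in> space M \<Longrightarrow> Y \<omega> \<le> X \<omega>"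
    and d: "distr M borel Y = distr M borel X"
  shows "AE \<omega> in M. q < X \<omega> \<longrightarrow> q < Y \<omega>"
proof -
  interpret prob_space M by (rule P)
  let ?SX = "X -` {q<..} \<inter> space M" and ?SY = "Y -` {q<..} \<inter> space M"
  have sets: "?SX \<in> sets M" "?SY \<in> sets M"
    using measurable_sets[OF X, of "{q<..}"] measurable_sets[OF Y, of "{q<..}"] by simp_all
  have "emeasure M ?SY = emeasure M ?SX"
    using emeasure_distr[OF Y, of "{q<..}"] emeasure_distr[OF X, of "{q<..}"] d by simp
  moreover have "?SY \<subseteq> ?SX" using le by (auto intro: less_le_trans)
  ultimately have "emeasure M (?SX - ?SY) = 0"
    using emeasure_Diff[OF _ sets] by simp
  hence "?SX - ?SY \<in> null_sets M" using sets by auto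
  thus ?thesis by (rule AE_I') auto
qed

lemma AE_le_if_ge_and_same_distr:
  fixes X Y :: "'w \<Rightarrow> ennreal"
  assumes "prob_space M" "X \<in> borel_measurable M" "Y \<in> borel_measurable M"
    and "\<And>\<omega>. \<omega> \<in> space M \<Longrightarrow> Y \<omega> \<le> X \<omega>"
    and "distr M borel Y = distr M borel X"
  shows "AE \<omega> in M. X \<omega> \<le> Y \<omega>"
proof -
  have "AE \<omega> in M. \<forall>r::rat. ennreal (real_of_rat r) < X \<omega> \<longrightarrow> ennreal (real_of_rat r) < Y \<omega>"
    using AE_gt_imp_gt_if_ge_and_same_distr[OF assms] by (simp add: AE_all_countable)
  thus ?thesis
  proof eventually_elim
    case (elim \<omega>)
    show ?case
    proof (rule ccontr)
      assume "\<not> X \<omega> \<le> Y \<omega>"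
      hence "Y \<omega> < X \<omega>" by simp
      then obtain r :: rat where "Y \<omega> < real_of_rat r" "real_of_rat r < X \<omega>"
        using ennreal_rat_dense by blast
      with elim show False by auto
    qed
  qed
qed

lemma AE_monotone_seq_const_if_same_distr:
  fixes X :: "nat \<Rightarrow> 'w \<Rightarrow> ennreal"
  assumes P: "prob_space M" and X: "\<And>n. X n \<in> borel_measurable M"
    and distr: "\<And>n. distr M borel (X n) = distr M borel (X 0)"
    and mono: "(\<forall>\<omega>\<in>space M. decseq (\<lambda>n. X n \<omega>)) \<or> (\<forall>\<omega>\<in>space M. incseq (\<lambda>n. X n \<omega>))"
  shows "AE \<omega> in M. \<forall>n. X n \<omega> = X 0 \<omega>"
proof -
  have "AE \<omega> in M. X (Suc n) \<omega> = X n \<omega>" for n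
  proof -
    have same: "distr M borel (X (Suc n)) = distr M borel (X n)" using distr[of n] distr[of "Suc n"] by simp
    from mono show ?thesis
    proof
      assume dec: "\<forall>\<omega>\<in>space M. decseq (\<lambda>n. X n \<omega>)"
      hence "AE \<omega> in M. X n \<omega> \<le> X (Suc n) \<omega>"
        by (intro AE_le_if_ge_and_same_distr[OF P X X _ same]) (simp add: decseq_Suc_iff)
      thus ?thesis using AE_space by eventually_elim (use dec in \<open>auto simp: decseq_Suc_iff intro: order_antisym\<close>)
    next
      assume inc: "\<forall>\<omega>\<in>space M. incseq (\<lambda>n. X n \<omega>)"
      hence "AE \<omega> in M. X (Suc n) \<omega> \<le> X n \<omega>"
        by (intro AE_le_if_ge_and_same_distr[OF P X X _ same[symmetric]]) (simp add: incseq_Suc_iff)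
      thus ?thesis using AE_space by eventually_elim (use inc in \<open>auto simp: incseq_Suc_iff intro: order_antisym\<close>)
    qed
  qed
  hence "AE \<omega> in M. \<forall>n. X (Suc n) \<omega> = X n \<omega>" by (simp add: AE_all_countable)
  thus ?thesis
  proof eventually_elim
    case (elim \<omega>)
    show ?case
    proof
      fix n show "X n \<omega> = X 0 \<omega>" using elim by (induction n) auto
    qed
  qed
qed

lemma distr_emeasure_translation:
  assumes st: "stationary_random_measure M \<theta> \<Psi>" and B: "B \<in> sets borel"
  shows "distr M borel (\<lambda>\<omega>. emeasure (\<Psi> \<omega>) ((\<lambda>x. x + s) ` B)) = distr M borel (\<lambda>\<omega>. emeasure (\<Psi> \<omega>) B)"
proof -
  note F = stationary_random_measureD[OF st]
  have "distr M borel (\<lambda>\<omega>. emeasure (\<Psi> \<omega>) ((\<lambda>x. x + s) ` B))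
      = distr M borel (\<lambda>\<omega>. emeasure (\<Psi> (\<theta> s \<omega>)) B)"
    by (rule distr_cong) (simp_all add: F(6)[OF _ B])
  also have "\<dots> = distr (distr M M (\<theta> s)) borel (\<lambda>\<omega>. emeasure (\<Psi> \<omega>) B)"
    by (rule distr_distr[symmetric, OF F(4)[OF B] F(2), unfolded comp_def])
  also have "\<dots> = distr M borel (\<lambda>\<omega>. emeasure (\<Psi> \<omega>) B)" by (simp add: F(5))
  finally show ?thesis .
qed

lemma translation_Suc_image:
  fixes C :: "'a::real_vector set"
  shows "(\<lambda>x. x + real (Suc n) *\<^sub>R v) ` C = (\<lambda>x. x + real n *\<^sub>R v) ` (\<lambda>x. x + v) ` C"
  by (simp add: translation_image_image scaleR_add_left add.commute)

lemma decseq_translations: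
  fixes C :: "'a::real_vector set"
  assumes "(\<lambda>x. x + v) ` C \<subseteq> C"
  shows "decseq (\<lambda>n. (\<lambda>x. x + real n *\<^sub>R v) ` C)"
  by (rule decseq_SucI) (simp only: translation_Suc_image image_mono[OF assms])

lemma incseq_translations:
  fixes C :: "'a::real_vector set"
  assumes "C \<subseteq> (\<lambda>x. x + v) ` C"
  shows "incseq (\<lambda>n. (\<lambda>x. x + real n *\<^sub>R v) ` C)"
  by (rule incseq_SucI) (simp only: translation_Suc_image image_mono[OF assms])

lemma AE_emeasure_translations_const:
  fixes \<Psi> :: "'w \<Rightarrow> 'a::euclidean_space measure"
  assumes st: "stationary_random_measure M \<theta> \<Psi>" and C: "C \<in> sets borel"
    and nested: "(\<lambda>x. x + v) ` C \<subseteq> C \<or> C \<subseteq> (\<lambda>x. x + v) ` C"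
  shows "AE \<omega> in M. \<forall>n. emeasure (\<Psi> \<omega>) ((\<lambda>x. x + real n *\<^sub>R v) ` C) = emeasure (\<Psi> \<omega>) C"
proof -
  note F = stationary_random_measureD[OF st]
  define A where "A n = (\<lambda>x. x + real n *\<^sub>R v) ` C" for n :: nat
  have A0: "A 0 = C" by (simp add: A_def)
  have A_borel: "A n \<in> sets borel" for n
    unfolding A_def by (rule sets_borel_translation[OF C])
  have "AE \<omega> in M. \<forall>n. emeasure (\<Psi> \<omega>) (A n) = emeasure (\<Psi> \<omega>) (A 0)"
  proof (rule AE_monotone_seq_const_if_same_distr[OF F(1) F(4)[OF A_borel]])
    show "distr M borel (\<lambda>\<omega>. emeasure (\<Psi> \<omega>) (A n)) = distr M borel (\<lambda>\<omega>. emeasure (\<Psi> \<omega>) (A 0))" for n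
      unfolding A0 unfolding A_def by (rule distr_emeasure_translation[OF st C])
    from nested have "decseq A \<or> incseq A"
      unfolding A_def using decseq_translations incseq_translations by blast
    thus "(\<forall>\<omega>\<in>space M. decseq (\<lambda>n. emeasure (\<Psi> \<omega>) (A n)))
        \<or> (\<forall>\<omega>\<in>space M. incseq (\<lambda>n. emeasure (\<Psi> \<omega>) (A n)))"
      using A_borel F(3) by (auto intro!: decseq_emeasure incseq_emeasure)
  qed
  thus ?thesis by (simp add: A_def)
qed

lemma AE_emeasure_infinite_if_translations_sweep:
  fixes \<Psi> :: "'w \<Rightarrow> 'a::euclidean_space measure"
  assumes st: "stationary_random_measure M \<theta> \<Psi>"
    and nonzero: "AE \<omega> in M. emeasure (\<Psi> \<omega>) UNIV \<noteq> 0"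
    and C: "C \<in> sets borel"
    and shift: "(\<lambda>x. x + v) ` C \<subseteq> C"
    and vanish: "(\<Inter>n. (\<lambda>x. x + real n *\<^sub>R v) ` C) = {}"
    and exhaust: "(\<Union>n. (\<lambda>x. x + real n *\<^sub>R (- v)) ` C) = UNIV"
  shows "AE \<omega> in M. emeasure (\<Psi> \<omega>) C = \<infinity>"
proof -
  define A where "A n = (\<lambda>x. x + real n *\<^sub>R v) ` C" for n :: nat
  define B where "B n = (\<lambda>x. x + real n *\<^sub>R (- v)) ` C" for n :: nat
  have A_borel: "range A \<subseteq> sets borel" and B_borel: "range B \<subseteq> sets borel"
    unfolding A_def B_def using sets_borel_translation[OF C] by (auto simp del: scaleR_minus_right)
  have "C \<subseteq> (\<lambda>x. x + - v) ` C"
    using image_mono[OF shift, of "\<lambda>x. x + - v"]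
    by (simp only: translation_image_image add.left_inverse add_0_right image_ident)
  have "decseq A" "incseq B"
    unfolding A_def B_def using decseq_translations[OF shift] incseq_translations[OF \<open>C \<subseteq> _\<close>]
    by blast+
  have "AE \<omega> in M. \<forall>n. emeasure (\<Psi> \<omega>) (B n) = emeasure (\<Psi> \<omega>) C"
    unfolding B_def using AE_emeasure_translations_const[OF st C] \<open>C \<subseteq> _\<close> by blast
  moreover have "AE \<omega> in M. \<forall>n. emeasure (\<Psi> \<omega>) (A n) = emeasure (\<Psi> \<omega>) C"
    unfolding A_def using AE_emeasure_translations_const[OF st C] shift by blast
  ultimately show ?thesis using nonzero AE_space
  proof eventually_elim
    case (elim \<omega>)
    hence sets: "sets (\<Psi> \<omega>) = sets borel" using stationary_random_measureD(3)[OF st] by blast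
    have "emeasure (\<Psi> \<omega>) C = (SUP n. emeasure (\<Psi> \<omega>) (B n))" using elim(1) by simp
    also have "\<dots> = emeasure (\<Psi> \<omega>) UNIV"
      using SUP_emeasure_incseq[of B "\<Psi> \<omega>"] \<open>incseq B\<close> B_borel sets exhaust by (simp add: B_def)
    finally have "emeasure (\<Psi> \<omega>) C \<noteq> 0" using elim(3) by simp
    moreover have "emeasure (\<Psi> \<omega>) C = 0" if "emeasure (\<Psi> \<omega>) C \<noteq> \<infinity>"
    proof -
      have "emeasure (\<Psi> \<omega>) C = (INF n. emeasure (\<Psi> \<omega>) (A n))" using elim(2) by simp
      also have "\<dots> = emeasure (\<Psi> \<omega>) (\<Inter>n. A n)"
        using INF_emeasure_decseq[of A "\<Psi> \<omega>"] \<open>decseq A\<close> A_borel sets elim(2) that by simp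
      finally show ?thesis using vanish by (simp add: A_def)
    qed
    ultimately show ?case by blast
  qed
qed

lemma AE_emeasure_axial_cone_infinite:
  fixes \<Psi> :: "'w \<Rightarrow> 'a::euclidean_space measure"
  assumes "stationary_random_measure M \<theta> \<Psi>" "AE \<omega> in M. emeasure (\<Psi> \<omega>) UNIV \<noteq> 0" "v \<noteq> 0"
  shows "AE \<omega> in M. emeasure (\<Psi> \<omega>) (axial_cone p v) = \<infinity>"
  using assms(1,2) borel_open[OF open_axial_cone] axial_cone_translation_subset
    INT_translations_axial_cone[OF assms(3)] UN_translations_axial_cone[OF assms(3)]
  by (rule AE_emeasure_infinite_if_translations_sweep)

theorem mainTheorem16:
  shows "(\<forall>\<psi> :: 'a::euclidean_space measure.
            locally_finite_borel \<psi>
            \<and> (\<forall>a b. a \<noteq> 0 \<longrightarrow> emeasure \<psi> {x. a \<bullet> x > b} = \<infinity>)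
            \<longrightarrow> (\<forall>\<xi>. bounded (voronoi_territory \<psi> \<xi>)))
       \<and> (\<forall>(M :: 'w measure) (\<theta> :: 'a \<Rightarrow> 'w \<Rightarrow> 'w) (\<Psi> :: 'w \<Rightarrow> 'a measure).
            stationary_random_measure M \<theta> \<Psi>
            \<and> (AE \<omega> in M. emeasure (\<Psi> \<omega>) UNIV \<noteq> 0)
            \<longrightarrow> (AE \<omega> in M. \<forall>\<xi>. bounded (voronoi_territory (\<Psi> \<omega>) \<xi>)))"
proof (intro conjI allI impI)
  fix \<psi> :: "'a measure" and \<xi> :: 'a
  assume "locally_finite_borel \<psi> \<and> (\<forall>a b. a \<noteq> 0 \<longrightarrow> emeasure \<psi> {x. a \<bullet> x > b} = \<infinity>)"
  then show "bounded (voronoi_territory \<psi> \<xi>)"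
    by (intro bounded_voronoi_territory) (auto simp: locally_finite_borel_def)
next
  fix M :: "'w measure" and \<theta> :: "'a \<Rightarrow> 'w \<Rightarrow> 'w" and \<Psi> :: "'w \<Rightarrow> 'a measure"
  assume "stationary_random_measure M \<theta> \<Psi> \<and> (AE \<omega> in M. emeasure (\<Psi> \<omega>) UNIV \<noteq> 0)"
  hence st: "stationary_random_measure M \<theta> \<Psi>" and nonzero: "AE \<omega> in M. emeasure (\<Psi> \<omega>) UNIV \<noteq> 0"
    by auto
  obtain D :: "'a set" where D: "countable D" "\<And>X. open X \<Longrightarrow> X \<noteq> {} \<Longrightarrow> \<exists>d\<in>D. d \<in> X"
    using countable_dense_exists by blast
  have "AE \<omega> in M. \<forall>pv\<in>D \<times> D. snd pv \<noteq> 0 \<longrightarrow> emeasure (\<Psi> \<omega>) (axial_cone (fst pv) (snd pv)) = \<infinity>"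
    using D(1) by (intro AE_ball_countable' AE_impI AE_emeasure_axial_cone_infinite[OF st nonzero]) auto
  then show "AE \<omega> in M. \<forall>\<xi>. bounded (voronoi_territory (\<Psi> \<omega>) \<xi>)"
    using AE_space
  proof eventually_elim
    case (elim \<omega>)
    have sets: "sets (\<Psi> \<omega>) = sets borel" by (rule stationary_random_measureD(3)[OF st elim(2)])
    have "emeasure (\<Psi> \<omega>) (axial_cone p v) = \<infinity>" if "p \<in> D" "v \<in> D" "v \<noteq> 0" for p v
      using elim(1) that by force
    hence "emeasure (\<Psi> \<omega>) {x. a \<bullet> x > b} = \<infinity>" if "a \<noteq> 0" for a b
      using emeasure_halfspace_infinite_if_dense_cones[OF sets D(2) _ that] by blast
    thus ?case using bounded_voronoi_territory[OF sets] by blast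
  qed
qed

end
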